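(* Let $\kappa\ge3$ be an integer and let $U=\begin{bmatrix} c_{RR} & c_{LR}\\ c_{RL} & c_{LL}\end{bmatrix}\in\mathrm{U}(2)$ satisfy $\overline{c_{LR}}\,\det U=2/\kappa-1$. Consider the Type II quantum walk $Y^\kappa_t$ with coin $U$, initial state $|0,L\rangle$ and reflection phase $\gamma=0$ (Case A) or $\gamma=\pi$ (Case B); this walk describes the distance from the origin of the quantum walk on the $\kappa$-regular tree $\mathbb{T}_\kappa$ started at the root with uniform initial coin state (Case A) or with initial coin state $\kappa^{-1/2}(1,e^{2\pi i/\kappa},\dots,e^{2\pi i(\kappa-1)/\kappa})$ (Case B). Then for every $x\in\{0,1,2,\dots\}$, as $t\to\infty$, $$P(Y_t^\kappa=x)-\frac{1+(-1)^{t+x}}{2}\times\begin{cases}C(\kappa), & x=0,\\ \kappa\, C(\kappa)\left(\frac{1}{\kappa-1}\right)^x, & x>0,\end{cases}\ \longrightarrow 0,$$ where $C(\kappa)=0$ in Case A and $C(\kappa)=\left(\frac{\kappa-2}{\kappa-1}\right)^2$ in Case B.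
   Context: Type II quantum walk: Hilbert space with orthonormal basis $\{|0,L\rangle\}\cup\{|x,R\rangle,|x,L\rangle: x\ge1\}$; unitary evolution $W$ given by $W|0,L\rangle=e^{i\gamma}|1,R\rangle$ and, for $x\ge1$, $W|x,R\rangle=c_{RR}|x+1,R\rangle+c_{LR}|x-1,L\rangle$, $W|x,L\rangle=c_{RL}|x+1,R\rangle+c_{LL}|x-1,L\rangle$ (with $|0,L\rangle$ as $|x-1,L\rangle$ when $x=1$). $P(Y_t^\kappa=x)=\sum_e|\langle e,W^t|0,L\rangle\rangle|^2$, summed over basis vectors $e$ at position $x$ (only $|0,L\rangle$ for $x=0$; $|x,R\rangle,|x,L\rangle$ for $x\ge1$). Equivalently, the parameter $b=\overline{c_{LR}}\det(U)e^{-i\gamma}$ equals $-1+2/\kappa$ in Case A and $1-2/\kappa$ in Case B. *)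

theory Defs
  imports "HOL-Analysis.Analysis"
begin

definition unitary2 :: "complex \<Rightarrow> complex \<Rightarrow> complex \<Rightarrow> complex \<Rightarrow> bool" where
  "unitary2 cRR cLR cRL cLL \<longleftrightarrow>
     cnj cRR * cRR + cnj cRL * cRL = 1 \<and>
     cnj cLR * cLR + cnj cLL * cLL = 1 \<and>
     cnj cRR * cLR + cnj cRL * cLL = 0 \<and>
     cnj cLR * cRR + cnj cLL * cRL = 0"

definition det2 :: "complex \<Rightarrow> complex \<Rightarrow> complex \<Rightarrow> complex \<Rightarrow> complex" where
  "det2 cRR cLR cRL cLL = cRR * cLL - cLR * cRL"

text \<open>A state is a pair (R, L) of amplitude functions: R x is the coefficient of |x,R>
  (x \<ge> 1; R 0 is unused and stays 0), L x is the coefficient of |x,L> (x \<ge> 0).\<close>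
definition qw2_step ::
  "complex \<Rightarrow> complex \<Rightarrow> complex \<Rightarrow> complex \<Rightarrow> real \<Rightarrow>
   (nat \<Rightarrow> complex) \<times> (nat \<Rightarrow> complex) \<Rightarrow> (nat \<Rightarrow> complex) \<times> (nat \<Rightarrow> complex)" where
  "qw2_step cRR cLR cRL cLL \<gamma> \<psi> =
     (let R = fst \<psi>; L = snd \<psi> in
       ((\<lambda>y. if y = 0 then 0
              else if y = 1 then exp (\<i> * complex_of_real \<gamma>) * L 0
              else cRR * R (y - 1) + cRL * L (y - 1)),
        (\<lambda>y. cLR * R (y + 1) + cLL * L (y + 1))))"

definition qw2_init :: "(nat \<Rightarrow> complex) \<times> (nat \<Rightarrow> complex)" where
  "qw2_init = ((\<lambda>_. 0), (\<lambda>y. if y = 0 then 1 else 0))"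

definition qw2_state ::
  "complex \<Rightarrow> complex \<Rightarrow> complex \<Rightarrow> complex \<Rightarrow> real \<Rightarrow> nat \<Rightarrow>
   (nat \<Rightarrow> complex) \<times> (nat \<Rightarrow> complex)" where
  "qw2_state cRR cLR cRL cLL \<gamma> t = (qw2_step cRR cLR cRL cLL \<gamma> ^^ t) qw2_init"

definition qw2_prob ::
  "complex \<Rightarrow> complex \<Rightarrow> complex \<Rightarrow> complex \<Rightarrow> real \<Rightarrow> nat \<Rightarrow> nat \<Rightarrow> real" where
  "qw2_prob cRR cLR cRL cLL \<gamma> t x =
     (let \<psi> = qw2_state cRR cLR cRL cLL \<gamma> t in
       if x = 0 then (cmod (snd \<psi> 0))\<^sup>2
       else (cmod (fst \<psi> x))\<^sup>2 + (cmod (snd \<psi> x))\<^sup>2)"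

end

theory Submission
  imports Defs
begin

text \<open>
  A coin with \<open>cnj c\<^sub>L\<^sub>R det U = -p\<close>, \<open>p = 1 - 2/\<kappa>\<close>, is the real coin
  \<open>[[q, -p], [p, q]]\<close> (\<open>q = \<surd>(1 - p\<^sup>2)\<close>) up to unimodular phases, which only multiply the
  amplitudes by unimodular factors (gauge invariance of the probabilities).  For the real coin
  the generating functions \<open>\<Sum>\<^sub>t \<psi>\<^sub>t(y) z\<^sup>t\<close> of the amplitudes are found explicitly: they are
  \<open>K(z) / (1 - z\<^sup>2)\<close>, where \<open>K\<close> is built from the root \<open>\<rho>\<close> of \<open>q z (\<rho>\<^sup>2 + 1) = (1 + z\<^sup>2) \<rho>\<close>,
  a power series involving \<open>\<surd>((1 + z\<^sup>2)\<^sup>2 - 4 q\<^sup>2 z\<^sup>2)\<close>.  These \<open>K\<close> have absolutely summable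
  coefficients, so they can be evaluated at \<open>z = \<plusminus>1\<close>, and the coefficients of \<open>K / (1 - z\<^sup>2)\<close>
  approach \<open>(K(1) + (-1)\<^sup>t K(-1)) / 2\<close>.  Evaluating \<open>K(\<plusminus>1)\<close> gives the limit profile.
\<close>

unbundle no vec_syntax
notation fps_nth (infixl "$" 75)

section \<open>Absolutely summable power series\<close>

text \<open>The library's \<open>eval_fps\<close> rules only cover the
  open disk of convergence; we need the boundary points \<open>z = \<plusminus>1\<close>.\<close>
definition abs_summable_fps :: "'a::real_normed_vector fps \<Rightarrow> bool" where
  "abs_summable_fps f \<longleftrightarrow> summable (\<lambda>n. norm (f $ n))"

lemma abs_summable_fps_terms:
  fixes f :: "'a::real_normed_div_algebra fps"
  assumes "abs_summable_fps f" "norm s \<le> 1"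
  shows "summable (\<lambda>n. norm (f $ n * s ^ n))"
proof (rule summable_comparison_test[OF _ assms(1)[unfolded abs_summable_fps_def]])
  show "\<exists>N. \<forall>n\<ge>N. norm (norm (f $ n * s ^ n)) \<le> norm (f $ n)"
    using assms(2) by (auto simp: norm_mult norm_power intro!: mult_left_le power_le_one)
qed

lemma eval_fps_sums_disk:
  fixes f :: "'a::{banach, real_normed_div_algebra} fps"
  assumes "abs_summable_fps f" "norm s \<le> 1"
  shows "(\<lambda>n. f $ n * s ^ n) sums eval_fps f s"
  unfolding eval_fps_def
  using summable_norm_cancel[OF abs_summable_fps_terms[OF assms]] by (simp add: summable_sums)

lemma abs_summable_fps_finite:
  "(\<And>n. n > N \<Longrightarrow> f $ n = 0) \<Longrightarrow> abs_summable_fps f"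
  unfolding abs_summable_fps_def by (rule summable_finite[of "{..N}"]) auto

lemma abs_summable_fps_const: "abs_summable_fps (fps_const c)"
  by (rule abs_summable_fps_finite[of 0]) auto

lemma abs_summable_fps_0: "abs_summable_fps 0"
  by (simp add: abs_summable_fps_def)

lemma abs_summable_fps_1: "abs_summable_fps 1"
  using abs_summable_fps_const[of 1] by simp

lemma abs_summable_fps_X: "abs_summable_fps (fps_X :: 'a::{real_normed_vector, zero_neq_one} fps)"
  by (rule abs_summable_fps_finite[of 1]) auto

lemma abs_summable_fps_add:
  assumes "abs_summable_fps f" "abs_summable_fps g"
  shows "abs_summable_fps (f + g)"
  using summable_add[OF assms[unfolded abs_summable_fps_def]] unfolding abs_summable_fps_def
  by (rule summable_comparison_test[rotated]) (auto intro: norm_triangle_ineq)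

lemma abs_summable_fps_uminus: "abs_summable_fps f \<Longrightarrow> abs_summable_fps (- f)"
  by (simp add: abs_summable_fps_def)

lemma abs_summable_fps_diff:
  "abs_summable_fps f \<Longrightarrow> abs_summable_fps g \<Longrightarrow> abs_summable_fps (f - g)"
  using abs_summable_fps_add[of f "- g"] abs_summable_fps_uminus[of g] by simp

lemma abs_summable_fps_mult:
  fixes f g :: "'a::{banach, real_normed_div_algebra} fps"
  assumes "abs_summable_fps f" "abs_summable_fps g"
  shows "abs_summable_fps (f * g)"
proof -
  have "summable (\<lambda>k. \<Sum>i\<le>k. norm (f $ i) * norm (g $ (k - i)))"
    using assms by (intro summable_Cauchy_product) (auto simp: abs_summable_fps_def)
  then show ?thesis
    unfolding abs_summable_fps_def
    by (rule summable_comparison_test[rotated])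
       (auto simp: fps_mult_nth atLeast0AtMost norm_mult[symmetric] intro!: norm_sum)
qed

lemma abs_summable_fps_power:
  fixes f :: "'a::{banach, real_normed_div_algebra} fps"
  shows "abs_summable_fps f \<Longrightarrow> abs_summable_fps (f ^ n)"
  by (induction n) (auto intro: abs_summable_fps_mult abs_summable_fps_1)

lemmas abs_summable_fps_intros =
  abs_summable_fps_const abs_summable_fps_0 abs_summable_fps_1 abs_summable_fps_X
  abs_summable_fps_add abs_summable_fps_uminus abs_summable_fps_diff abs_summable_fps_mult abs_summable_fps_power

lemma eval_fps_add_disk:
  fixes f g :: "'a::{banach, real_normed_div_algebra} fps"
  assumes "abs_summable_fps f" "abs_summable_fps g" "norm s \<le> 1"
  shows "eval_fps (f + g) s = eval_fps f s + eval_fps g s"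
  using sums_add[OF eval_fps_sums_disk[OF assms(1,3)] eval_fps_sums_disk[OF assms(2,3)]]
  by (auto simp: eval_fps_def distrib_right intro!: sums_unique[symmetric])

lemma eval_fps_uminus_disk:
  fixes f :: "'a::{banach, real_normed_div_algebra} fps"
  assumes "abs_summable_fps f" "norm s \<le> 1"
  shows "eval_fps (- f) s = - eval_fps f s"
  using sums_minus[OF eval_fps_sums_disk[OF assms]]
  by (auto simp: eval_fps_def intro!: sums_unique[symmetric])

lemma eval_fps_diff_disk:
  fixes f g :: "'a::{banach, real_normed_div_algebra} fps"
  assumes "abs_summable_fps f" "abs_summable_fps g" "norm s \<le> 1"
  shows "eval_fps (f - g) s = eval_fps f s - eval_fps g s"
  using eval_fps_add_disk[of f "- g" s] eval_fps_uminus_disk[of g s] assms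
  by (simp add: abs_summable_fps_uminus)

lemma eval_fps_mult_disk:
  fixes f g :: "'a::{banach, real_normed_div_algebra, comm_ring_1} fps"
  assumes "abs_summable_fps f" "abs_summable_fps g" "norm s \<le> 1"
  shows "eval_fps (f * g) s = eval_fps f s * eval_fps g s"
proof -
  have "eval_fps f s * eval_fps g s
      = (\<Sum>k. \<Sum>i\<le>k. (f $ i * s ^ i) * (g $ (k - i) * s ^ (k - i)))"
    unfolding eval_fps_def
    by (rule Cauchy_product[OF abs_summable_fps_terms[OF assms(1,3)]
                               abs_summable_fps_terms[OF assms(2,3)]])
  also have "\<dots> = (\<Sum>k. (f * g) $ k * s ^ k)"
  proof (rule suminf_cong)
    fix k
    have "(\<Sum>i\<le>k. (f $ i * s ^ i) * (g $ (k - i) * s ^ (k - i)))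
        = (\<Sum>i\<le>k. f $ i * g $ (k - i) * s ^ k)"
      by (rule sum.cong) (auto simp: power_add[symmetric] ac_simps)
    then show "(\<Sum>i\<le>k. (f $ i * s ^ i) * (g $ (k - i) * s ^ (k - i))) = (f * g) $ k * s ^ k"
      by (simp add: fps_mult_nth atLeast0AtMost sum_distrib_right)
  qed
  finally show ?thesis unfolding eval_fps_def by simp
qed

lemma eval_fps_power_disk:
  fixes f :: "'a::{banach, real_normed_div_algebra, comm_ring_1} fps"
  assumes "abs_summable_fps f" "norm s \<le> 1"
  shows "eval_fps (f ^ n) s = eval_fps f s ^ n"
  using assms by (induction n) (auto simp: eval_fps_mult_disk abs_summable_fps_power)

lemmas eval_fps_disk_simps =
  eval_fps_add_disk eval_fps_uminus_disk eval_fps_diff_disk eval_fps_mult_disk eval_fps_power_disk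

section \<open>The square root series \<open>\<surd>(1 - w z)\<close>\<close>

lemma gbinomial_sign_pochhammer:
  fixes a :: "'a::field_char_0"
  shows "(a gchoose k) * (-1) ^ k = pochhammer (- a) k / fact k"
  by (simp add: gbinomial_pochhammer power_mult_distrib[symmetric])

lemma pochhammer_nonneg_of_nonneg:
  fixes x :: "'a::linordered_semidom"
  shows "x \<ge> 0 \<Longrightarrow> pochhammer x n \<ge> 0"
  by (induction n) (auto simp: pochhammer_Suc)

text \<open>For \<open>0 \<le> a \<le> 1\<close> all \<open>a gchoose k\<close> with \<open>k \<ge> 1\<close> have sign \<open>(-1)\<^sup>k\<^sup>-\<^sup>1\<close>, so the partial
  sums of their absolute values telescope via \<open>gbinomial_sum_lower_neg\<close>.\<close>
lemma sum_abs_gbinomial: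
  fixes a :: real
  assumes "0 \<le> a" "a \<le> 1"
  shows "(\<Sum>k\<le>m. \<bar>a gchoose k\<bar>) = 2 - pochhammer (1 - a) m / fact m"
proof -
  have abs_eq: "\<bar>a gchoose k\<bar> = - ((a gchoose k) * (-1) ^ k)" if "k > 0" for k
  proof -
    obtain j where k: "k = Suc j" using \<open>k > 0\<close> by (cases k) auto
    have "(a gchoose k) * (-1) ^ k = - (a * pochhammer (1 - a) j / fact k)"
      unfolding gbinomial_sign_pochhammer k pochhammer_rec by simp
    moreover have "a * pochhammer (1 - a) j / fact k \<ge> 0"
      using assms by (intro divide_nonneg_pos mult_nonneg_nonneg pochhammer_nonneg_of_nonneg) auto
    moreover have "\<bar>a gchoose k\<bar> = \<bar>(a gchoose k) * (-1) ^ k\<bar>"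
      by (simp add: abs_mult power_abs)
    ultimately show ?thesis
      by (metis abs_minus_cancel abs_of_nonneg minus_minus)
  qed
  have "(\<Sum>k\<le>m. \<bar>a gchoose k\<bar>) = 1 + (\<Sum>k\<in>{1..m}. \<bar>a gchoose k\<bar>)"
    by (simp add: atLeast1_atMost_eq_remove0 sum.remove[of "{..m}" 0])
  also have "(\<Sum>k\<in>{1..m}. \<bar>a gchoose k\<bar>) = - (\<Sum>k\<in>{1..m}. (a gchoose k) * (-1) ^ k)"
    by (simp add: abs_eq sum_negf)
  also have "(\<Sum>k\<in>{1..m}. (a gchoose k) * (-1) ^ k) = (\<Sum>k\<le>m. (a gchoose k) * (-1) ^ k) - 1"
    by (simp add: atLeast1_atMost_eq_remove0 sum.remove[of "{..m}" 0])
  also have "(\<Sum>k\<le>m. (a gchoose k) * (-1) ^ k) = pochhammer (1 - a) m / fact m"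
    by (subst gbinomial_sum_lower_neg)
       (simp add: mult.commute[of "(-1) ^ m"] gbinomial_sign_pochhammer)
  finally show ?thesis by simp
qed

text \<open>For \<open>0 \<le> a \<le> 1\<close> the binomial series of \<open>(1 + z)\<^sup>a\<close> converges absolutely on the
  closed unit disk; this is what makes \<open>\<surd>(1 - w z)\<close> evaluable at \<open>z = \<plusminus>1\<close>.\<close>
lemma summable_abs_gbinomial:
  fixes a :: real
  assumes "0 \<le> a" "a \<le> 1"
  shows "summable (\<lambda>k. \<bar>a gchoose k\<bar>)"
proof (rule bounded_imp_summable[of _ 2])
  fix m
  have "pochhammer (1 - a) m / fact m \<ge> 0"
    using assms by (intro divide_nonneg_pos pochhammer_nonneg_of_nonneg) auto
  then show "(\<Sum>k\<le>m. \<bar>a gchoose k\<bar>) \<le> 2"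
    by (simp add: sum_abs_gbinomial[OF assms])
qed auto

definition sqrt_linear_fps :: "complex \<Rightarrow> complex fps" where
  "sqrt_linear_fps w = fps_compose (fps_binomial (1/2)) (fps_const (- w) * fps_X)"

lemma sqrt_linear_fps_nth: "sqrt_linear_fps w $ n = (- w) ^ n * ((1/2) gchoose n)"
  by (simp add: sqrt_linear_fps_def)

lemma sqrt_linear_fps_squared: "sqrt_linear_fps w ^ 2 = 1 - fps_const w * fps_X"
proof -
  have "sqrt_linear_fps w ^ 2 = fps_compose (fps_binomial (1/2) * fps_binomial (1/2)) (fps_const (- w) * fps_X)"
    by (simp add: sqrt_linear_fps_def power2_eq_square fps_compose_mult_distrib)
  also have "fps_binomial (1/2) * fps_binomial (1/2) = (1 + fps_X :: complex fps)"
    by (simp add: fps_binomial_add_mult[symmetric] fps_binomial_1)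
  finally show ?thesis
    by (simp add: fps_compose_add_distrib)
qed

lemma complex_half_gchoose: "((1/2) :: complex) gchoose n = of_real ((1/2::real) gchoose n)"
  by (simp add: gbinomial_pochhammer pochhammer_of_real[symmetric])

lemma abs_summable_sqrt_linear_fps:
  assumes "norm w \<le> 1"
  shows "abs_summable_fps (sqrt_linear_fps w)"
proof -
  have bound: "norm (sqrt_linear_fps w $ n) \<le> \<bar>(1/2::real) gchoose n\<bar>" for n
  proof -
    have "norm (((1/2) :: complex) gchoose n) = \<bar>(1/2::real) gchoose n\<bar>"
      by (simp add: complex_half_gchoose)
    then show ?thesis
      using assms by (simp add: sqrt_linear_fps_nth norm_mult norm_power mult_left_le_one_le power_le_one)
  qed
  show ?thesis
    unfolding abs_summable_fps_def
    by (rule summable_comparison_test'[where g = "\<lambda>n. \<bar>(1/2::real) gchoose n\<bar>"])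
       (use bound summable_abs_gbinomial in auto)
qed

lemma eval_sqrt_linear_fps_cnj:
  assumes "norm w \<le> 1" "\<bar>r\<bar> \<le> 1"
  shows "eval_fps (sqrt_linear_fps (cnj w)) (of_real r) = cnj (eval_fps (sqrt_linear_fps w) (of_real r))"
proof -
  have "(\<lambda>n. sqrt_linear_fps w $ n * of_real r ^ n) sums eval_fps (sqrt_linear_fps w) (of_real r)"
    using assms by (intro eval_fps_sums_disk abs_summable_sqrt_linear_fps) auto
  then have "(\<lambda>n. cnj (sqrt_linear_fps w $ n * of_real r ^ n)) sums cnj (eval_fps (sqrt_linear_fps w) (of_real r))"
    by (simp only: sums_cnj)
  then have "(\<lambda>n. sqrt_linear_fps (cnj w) $ n * of_real r ^ n) sums cnj (eval_fps (sqrt_linear_fps w) (of_real r))"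
    by (simp add: sqrt_linear_fps_nth complex_half_gchoose)
  then show ?thesis
    using eval_fps_sums_disk[OF abs_summable_sqrt_linear_fps, of "cnj w" "of_real r"] assms
    by (auto dest: sums_unique2)
qed

section \<open>Coefficient asymptotics of \<open>K / (1 - z\<^sup>2)\<close>\<close>

text \<open>The series \<open>1 / (1 - z\<^sup>2)\<close>, which turns the transient part of the amplitudes into
  their parity-dependent limits.\<close>
definition parity_fps :: "'a::comm_ring_1 fps" where
  "parity_fps = Abs_fps (\<lambda>n. if even n then 1 else 0)"

lemma parity_fps_times: "parity_fps * (1 - fps_X ^ 2) = (1 :: 'a::comm_ring_1 fps)"
proof (rule fps_ext)
  fix n
  show "(parity_fps * (1 - fps_X ^ 2)) $ n = (1 :: 'a fps) $ n"
    by (cases n; cases "n - 1") (simp_all add: parity_fps_def algebra_simps power2_eq_square)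
qed

lemma parity_fps_coeff_limit:
  fixes K :: "'a::{banach, real_normed_field} fps"
  assumes K: "abs_summable_fps K"
  shows "(\<lambda>n. (K * parity_fps) $ n - (eval_fps K 1 + (-1) ^ n * eval_fps K (-1)) / 2) \<longlonglongrightarrow> 0"
proof -
  define A where "A = (\<lambda>n. \<Sum>i\<le>n. K $ i)"
  define B where "B = (\<lambda>n. \<Sum>i\<le>n. K $ i * (-1) ^ i)"
  have coeff: "(K * parity_fps) $ n = (A n + (-1) ^ n * B n) / 2" for n
  proof -
    have "(-1 :: 'a) ^ (n - i) = (-1) ^ n * (-1) ^ i" if "i \<le> n" for i
      using that by (auto simp: minus_one_power_iff even_diff_nat)
    then have "(K * parity_fps) $ n = (\<Sum>i\<le>n. (K $ i + (-1) ^ n * (K $ i * (-1) ^ i)) / 2)"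
      by (auto simp: fps_mult_nth atLeast0AtMost parity_fps_def field_simps
               intro!: sum.cong split: if_splits)
    then show ?thesis
      by (simp add: A_def B_def sum_divide_distrib[symmetric] sum.distrib sum_distrib_left)
  qed
  have "A \<longlonglongrightarrow> eval_fps K 1"
    using eval_fps_sums_disk[OF K, of 1] by (simp add: sums_def_le A_def)
  moreover have "B \<longlonglongrightarrow> eval_fps K (-1)"
    using eval_fps_sums_disk[OF K, of "-1"] by (simp add: sums_def_le B_def)
  then have "(\<lambda>n. (-1) ^ n * (B n - eval_fps K (-1))) \<longlonglongrightarrow> 0"
    by (subst tendsto_norm_zero_iff[symmetric])
       (simp add: norm_mult norm_power tendsto_norm_zero LIM_zero)
  ultimately have "(\<lambda>n. ((A n - eval_fps K 1) + (-1) ^ n * (B n - eval_fps K (-1))) / 2) \<longlonglongrightarrow> 0"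
    by (intro tendsto_divide_zero tendsto_add_zero LIM_zero)
  then show ?thesis
    unfolding coeff by (simp add: algebra_simps diff_divide_distrib add_divide_distrib)
qed

lemma tendsto_norm_square_diff:
  fixes a b :: "nat \<Rightarrow> 'a::real_normed_vector"
  assumes "(\<lambda>n. a n - b n) \<longlonglongrightarrow> 0" and bounded: "\<And>n. norm (b n) \<le> M"
  shows "(\<lambda>n. (norm (a n))\<^sup>2 - (norm (b n))\<^sup>2) \<longlonglongrightarrow> 0"
proof (rule Lim_null_comparison)
  have "(\<lambda>n. norm (a n - b n)) \<longlonglongrightarrow> 0"
    using assms(1) by (simp add: tendsto_norm_zero)
  then have "(\<lambda>n. norm (a n - b n) * (norm (a n - b n) + 2 * M)) \<longlonglongrightarrow> 0 * (0 + 2 * M)"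
    by (intro tendsto_intros)
  then show "(\<lambda>n. norm (a n - b n) * (norm (a n - b n) + 2 * M)) \<longlonglongrightarrow> 0"
    by simp
  show "\<forall>\<^sub>F n in sequentially.
          norm ((norm (a n))\<^sup>2 - (norm (b n))\<^sup>2) \<le> norm (a n - b n) * (norm (a n - b n) + 2 * M)"
  proof (rule always_eventually, rule allI)
    fix n
    have "(norm (a n))\<^sup>2 - (norm (b n))\<^sup>2 = (norm (a n) - norm (b n)) * (norm (a n) + norm (b n))"
      by (simp add: power2_eq_square algebra_simps)
    then have "norm ((norm (a n))\<^sup>2 - (norm (b n))\<^sup>2) = \<bar>norm (a n) - norm (b n)\<bar> * (norm (a n) + norm (b n))"
      by (simp add: abs_mult)
    also have "\<dots> \<le> norm (a n - b n) * (norm (a n - b n) + 2 * M)"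
      using norm_triangle_ineq2[of "a n" "b n"] bounded[of n]
      by (intro mult_mono norm_triangle_ineq3) auto
    finally show "norm ((norm (a n))\<^sup>2 - (norm (b n))\<^sup>2) \<le> norm (a n - b n) * (norm (a n - b n) + 2 * M)" .
  qed
qed

lemma parity_fps_coeff_norm_square_limit:
  fixes K :: "complex fps"
  assumes K: "abs_summable_fps K"
    and boundary_values: "\<And>s. \<bar>s\<bar> = 1 \<Longrightarrow> eval_fps K (of_real s) = of_real (s ^ y * v)"
  shows "(\<lambda>n. (norm ((K * parity_fps) $ n))\<^sup>2 - (1 + (-1) ^ (n + y)) / 2 * v\<^sup>2) \<longlonglongrightarrow> 0"
proof -
  have at_1: "eval_fps K 1 = of_real v" and at_minus_1: "eval_fps K (-1) = (-1) ^ y * of_real v"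
    using boundary_values[of 1] boundary_values[of "-1"] by simp_all
  have limit: "(eval_fps K 1 + (-1) ^ n * eval_fps K (-1)) / 2 = of_real ((1 + (-1) ^ (n + y)) / 2 * v)"
    for n
    by (simp add: at_1 at_minus_1 power_add algebra_simps)
  have lim: "(\<lambda>n. (norm ((K * parity_fps) $ n))\<^sup>2
              - (norm (complex_of_real ((1 + (-1) ^ (n + y)) / 2 * v)))\<^sup>2) \<longlonglongrightarrow> 0"
  proof (rule tendsto_norm_square_diff[where M = "\<bar>v\<bar>"])
    show "(\<lambda>n. (K * parity_fps) $ n - complex_of_real ((1 + (-1) ^ (n + y)) / 2 * v)) \<longlonglongrightarrow> 0"
      using parity_fps_coeff_limit[OF K] by (simp only: limit)
    show "norm (complex_of_real ((1 + (-1) ^ (n + y)) / 2 * v)) \<le> \<bar>v\<bar>" for n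
      by (cases "even (n + y)") auto
  qed
  have square: "(norm (complex_of_real ((1 + (-1) ^ (n + y)) / 2 * v)))\<^sup>2 = (1 + (-1) ^ (n + y)) / 2 * v\<^sup>2"
    for n
    by (cases "even (n + y)") (auto simp: power_mult_distrib)
  show ?thesis
    using lim unfolding square .
qed

section \<open>Generating functions of the walk\<close>

lemma qw2_state_generating_functions:
  fixes FR FL :: "nat \<Rightarrow> complex fps"
  assumes R0: "FR 0 = 0"
    and R1: "FR 1 = fps_X * (fps_const (exp (\<i> * complex_of_real \<gamma>)) * FL 0)"
    and R: "\<And>y. y \<ge> 2 \<Longrightarrow> FR y = fps_X * (fps_const a * FR (y - 1) + fps_const c * FL (y - 1))"
    and L: "\<And>y. FL y = (if y = 0 then 1 else 0)
                        + fps_X * (fps_const b * FR (y + 1) + fps_const d * FL (y + 1))"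
  shows "qw2_state a b c d \<gamma> t = ((\<lambda>y. FR y $ t), (\<lambda>y. FL y $ t))"
proof (induction t)
  case 0
  have "FR y $ 0 = 0" for y
    using R0 R1 R[of y] by (cases "y \<le> 1") (auto simp: le_Suc_eq)
  moreover have "FL y $ 0 = (if y = 0 then 1 else 0)" for y
    by (subst L) simp
  ultimately show ?case
    by (simp add: qw2_state_def qw2_init_def fun_eq_iff)
next
  case (Suc t)
  have step: "qw2_state a b c d \<gamma> (Suc t) = qw2_step a b c d \<gamma> (qw2_state a b c d \<gamma> t)"
    by (simp add: qw2_state_def)
  have "FR y $ Suc t = (if y = 0 then 0 else if y = 1 then exp (\<i> * complex_of_real \<gamma>) * FL 0 $ t
                        else a * FR (y - 1) $ t + c * FL (y - 1) $ t)" for y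
    using R0 R1 R[of y] by (cases "y \<le> 1") (auto simp: le_Suc_eq)
  moreover have "FL y $ Suc t = b * FR (y + 1) $ t + d * FL (y + 1) $ t" for y
    by (subst L) simp
  ultimately show ?case
    unfolding step Suc by (simp add: qw2_step_def fun_eq_iff)
qed

text \<open>The quadratic for \<open>\<rho>\<close> rewritten as the statement that one step away from the origin
  multiplies the \<open>L\<close>-amplitudes by \<open>\<rho>\<close>.\<close>
lemma quadratic_step_identity:
  fixes z \<rho> P Q :: "'a::comm_ring_1"
  assumes quad: "Q * z * (\<rho>\<^sup>2 + 1) = (1 + z\<^sup>2) * \<rho>" and unit: "P * P + Q * Q = 1"
  shows "z * (Q * (\<rho> - Q * z) * \<rho> - P * P * z * \<rho>) = \<rho> - Q * z"
proof -
  have "z * (Q * (\<rho> - Q * z) * \<rho> - P * P * z * \<rho>)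
      = Q * z * (\<rho>\<^sup>2 + 1) - z\<^sup>2 * \<rho> * (P * P + Q * Q) - Q * z"
    by (simp add: algebra_simps power2_eq_square)
  also have "\<dots> = (1 + z\<^sup>2) * \<rho> - z\<^sup>2 * \<rho> - Q * z"
    by (simp only: quad unit mult_1_right)
  also have "\<dots> = \<rho> - Q * z"
    by (simp add: algebra_simps)
  finally show ?thesis .
qed

text \<open>The ansatz for the generating functions of the reduced walk, verified in an arbitrary
  commutative ring: \<open>z\<close> is the variable, \<open>\<rho>\<close> solves the quadratic \<open>Q z (\<rho>\<^sup>2 + 1) = (1 + z\<^sup>2) \<rho>\<close>,
  \<open>P' = P\<^sup>-\<^sup>1\<close>, and \<open>H\<close> (the return amplitude series) satisfies the linear equation \<open>ret\<close>.\<close>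
lemma walk_ansatz:
  fixes z \<rho> H P P' Q e :: "'a::comm_ring_1"
  assumes quad: "Q * z * (\<rho>\<^sup>2 + 1) = (1 + z\<^sup>2) * \<rho>"
    and unit: "P\<^sup>2 + Q\<^sup>2 = 1" and inv: "P * P' = 1"
    and ret: "H * (P - e * (Q * z * \<rho> - z\<^sup>2)) = P"
  defines "FR y \<equiv> if y = 0 then 0 else e * z * H * \<rho> ^ (y - 1)"
    and "FL y \<equiv> if y = 0 then H else e * P' * H * (\<rho> - Q * z) * \<rho> ^ (y - 1)"
  shows "FR 1 = z * (e * FL 0)"
    and "y \<ge> 2 \<Longrightarrow> FR y = z * (Q * FR (y - 1) + P * FL (y - 1))"
    and "FL y = (if y = 0 then 1 else 0) + z * (- P * FR (y + 1) + Q * FL (y + 1))"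
proof -
  show "FR 1 = z * (e * FL 0)"
    by (simp add: FR_def FL_def ac_simps)
next
  assume "y \<ge> 2"
  then obtain k where y: "y = Suc (Suc k)"
    by (metis add_2_eq_Suc le_Suc_ex)
  have "z * (Q * FR (y - 1) + P * FL (y - 1)) = e * z * H * \<rho> ^ k * (Q * z + (P * P') * (\<rho> - Q * z))"
    by (simp add: FR_def FL_def y algebra_simps)
  then show "FR y = z * (Q * FR (y - 1) + P * FL (y - 1))"
    by (simp add: inv FR_def y ac_simps)
next
  have unit': "P * P + Q * Q = 1"
    using unit by (simp add: power2_eq_square)
  have P_eq: "P = P' * (P * P)"
    using inv by (metis mult.left_commute mult_1_right)
  show "FL y = (if y = 0 then 1 else 0) + z * (- P * FR (y + 1) + Q * FL (y + 1))"
  proof (cases y)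
    case 0
    have "1 + z * (- P * FR 1 + Q * FL 1) = 1 + e * P' * H * z * (Q * \<rho> - (P * P + Q * Q) * z)"
      by (subst P_eq) (simp add: FR_def FL_def algebra_simps)
    also have "\<dots> = P' * (P + H * e * (Q * z * \<rho> - z\<^sup>2))"
      using inv by (simp add: unit' algebra_simps power2_eq_square)
    also have "P + H * e * (Q * z * \<rho> - z\<^sup>2) = H * P"
      using ret by (simp add: algebra_simps)
    finally show ?thesis
      using inv by (simp add: 0 FL_def ac_simps)
  next
    case (Suc k)
    have "z * (- P * FR (y + 1) + Q * FL (y + 1))
        = e * P' * H * \<rho> ^ k * (z * (Q * (\<rho> - Q * z) * \<rho> - P * P * z * \<rho>))"
      by (subst P_eq) (simp add: FR_def FL_def Suc algebra_simps)
    also have "\<dots> = e * P' * H * \<rho> ^ k * (\<rho> - Q * z)"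
      by (simp only: quadratic_step_identity[OF quad unit'])
    finally show ?thesis
      by (simp add: FL_def Suc ac_simps)
  qed
qed

text \<open>The linear equation for the return amplitude series, again in any commutative ring;
  \<open>c\<close> stands for \<open>Q / (1 - e P)\<close>, characterised by the two relations \<open>c1\<close> and \<open>c2\<close>.\<close>
lemma return_series_equation:
  fixes z \<rho> c e P Q :: "'a::comm_ring_1"
  assumes quad: "Q * z * (\<rho>\<^sup>2 + 1) = (1 + z\<^sup>2) * \<rho>" and e: "e * e = 1"
    and c1: "c * (e - P) = e * Q" and c2: "1 - c * Q = - e * P"
  shows "(1 - c * z * \<rho>) * (P - e * (Q * z * \<rho> - z\<^sup>2)) = P * (1 - z\<^sup>2)"
proof -
  have "(1 - c * z * \<rho>) * (P - e * (Q * z * \<rho> - z\<^sup>2))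
      = P + e * z\<^sup>2 * (1 - c * Q) + z * \<rho> * (c * (e - P) - e * Q)
          + c * e * z * (Q * z * (\<rho>\<^sup>2 + 1) - (1 + z\<^sup>2) * \<rho>)"
    by (simp add: algebra_simps power2_eq_square power3_eq_cube)
  also have "\<dots> = P + e * z\<^sup>2 * (- e * P)"
    by (simp only: quad c1 c2 diff_self mult_zero_right add_0_right)
  also have "\<dots> = P - (e * e) * (P * z\<^sup>2)"
    by (simp add: algebra_simps)
  finally show ?thesis
    by (simp add: e right_diff_distrib)
qed

section \<open>The real coin \<open>[[q, -p], [p, q]]\<close>\<close>

text \<open>Coin parameters \<open>p = sin \<phi>\<close>, \<open>q = cos \<phi>\<close> with \<open>0 < \<phi> < \<pi>/2\<close>.\<close>
locale reduced_coin =
  fixes p q :: real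
  assumes p_pos: "0 < p" and q_pos: "0 < q" and pq_unit: "p\<^sup>2 + q\<^sup>2 = 1"
begin

lemma p_less_1: "p < 1"
proof -
  have "p\<^sup>2 < 1"
    using pq_unit q_pos by (simp add: add_pos_nonneg flip: pq_unit)
  then show ?thesis
    using p_pos abs_square_less_1[of p] by simp
qed

text \<open>The point \<open>w = e\<^sup>i\<^sup>\<phi>\<close>; the four points \<open>\<plusminus>w\<close>, \<open>\<plusminus>cnj w\<close> are the roots of
  \<open>(1 + z\<^sup>2)\<^sup>2 - 4 q\<^sup>2 z\<^sup>2\<close>, all on the unit circle.\<close>
definition w :: complex where "w = Complex q p"

lemma norm_w: "norm w = 1"
  using pq_unit by (simp add: w_def cmod_def power2_eq_square add.commute)

text \<open>The square root of \<open>(1 + z\<^sup>2)\<^sup>2 - 4 q\<^sup>2 z\<^sup>2\<close> with constant term 1, as a product of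
  four absolutely summable square roots.\<close>
definition disc_root :: "complex fps" where
  "disc_root = sqrt_linear_fps w * sqrt_linear_fps (cnj w) * sqrt_linear_fps (- w) * sqrt_linear_fps (- cnj w)"

lemma disc_root_squared: "disc_root ^ 2 = (1 + fps_X ^ 2) ^ 2 - fps_const (of_real (4 * q\<^sup>2)) * fps_X ^ 2"
proof -
  let ?W = "fps_const w" and ?V = "fps_const (cnj w)"
  have prod: "?W * ?V = 1"
    using norm_w by (simp add: complex_norm_square[symmetric] mult.commute fps_const_mult[symmetric])
  have "w\<^sup>2 + (cnj w)\<^sup>2 = of_real (4 * q\<^sup>2 - 2)"
    using pq_unit by (simp add: w_def complex_eq_iff power2_eq_square algebra_simps)
  then have sum: "?W ^ 2 + ?V ^ 2 = fps_const (of_real (4 * q\<^sup>2) - 2)"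
    by simp
  have "disc_root ^ 2 = (1 - ?W * fps_X) * (1 - ?V * fps_X) * (1 + ?W * fps_X) * (1 + ?V * fps_X)"
    unfolding disc_root_def power_mult_distrib sqrt_linear_fps_squared fps_const_neg by simp
  also have "\<dots> = 1 - (?W ^ 2 + ?V ^ 2) * fps_X ^ 2 + (?W * ?V) ^ 2 * fps_X ^ 4"
    by (simp add: algebra_simps power2_eq_square power4_eq_xxxx)
  also have "\<dots> = (1 + fps_X ^ 2) ^ 2 - fps_const (of_real (4 * q\<^sup>2)) * fps_X ^ 2"
    unfolding prod sum fps_const_sub[symmetric]
    by (simp add: algebra_simps power2_eq_square power4_eq_xxxx numeral_fps_const)
  finally show ?thesis .
qed

lemma abs_summable_disc_root: "abs_summable_fps disc_root"
  unfolding disc_root_def using norm_w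
  by (intro abs_summable_fps_mult abs_summable_sqrt_linear_fps) auto

text \<open>On \<open>[-1, 1]\<close> the factors come in conjugate pairs, so the root is nonnegative there.\<close>
lemma eval_disc_root_real:
  assumes "\<bar>r\<bar> \<le> 1"
  shows "eval_fps disc_root (of_real r)
           = of_real ((norm (eval_fps (sqrt_linear_fps w) (of_real r)))\<^sup>2
                      * (norm (eval_fps (sqrt_linear_fps (- w)) (of_real r)))\<^sup>2)"
proof -
  let ?A = "eval_fps (sqrt_linear_fps w) (of_real r)"
  let ?B = "eval_fps (sqrt_linear_fps (- w)) (of_real r)"
  have "eval_fps disc_root (of_real r)
      = ?A * eval_fps (sqrt_linear_fps (cnj w)) (of_real r) * ?B
          * eval_fps (sqrt_linear_fps (cnj (- w))) (of_real r)"
    unfolding disc_root_def using norm_w assms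
    by (simp add: eval_fps_mult_disk abs_summable_fps_mult abs_summable_sqrt_linear_fps)
  also have "\<dots> = (?A * cnj ?A) * (?B * cnj ?B)"
    using norm_w assms by (simp add: eval_sqrt_linear_fps_cnj del: complex_cnj_minus)
  finally show ?thesis
    by (simp only: complex_norm_square[symmetric] of_real_mult)
qed

text \<open>At \<open>z = \<plusminus>1\<close> the root is the nonnegative square root of \<open>4 - 4 q\<^sup>2 = (2 p)\<^sup>2\<close>.\<close>
lemma eval_disc_root_unit:
  assumes "\<bar>s\<bar> = 1"
  shows "eval_fps disc_root (of_real s) = of_real (2 * p)"
proof -
  have s: "norm (complex_of_real s) \<le> 1" "s\<^sup>2 = 1"
    using assms by (auto simp: abs_square_eq_1)
  obtain t where t: "eval_fps disc_root (of_real s) = of_real t" "t \<ge> 0"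
    by (rule that[OF eval_disc_root_real]) (use assms in auto)
  have "of_real (t\<^sup>2) = eval_fps (disc_root ^ 2) (of_real s)"
    using t s by (simp add: eval_fps_power_disk abs_summable_disc_root)
  also have "\<dots> = (1 + of_real s ^ 2) ^ 2 - of_real (4 * q\<^sup>2) * of_real s ^ 2"
    unfolding disc_root_squared using s
    by (simp add: eval_fps_disk_simps abs_summable_fps_intros)
  also have "\<dots> = of_real ((1 + s\<^sup>2)\<^sup>2 - 4 * q\<^sup>2 * s\<^sup>2)"
    by simp
  also have "(1 + s\<^sup>2)\<^sup>2 - 4 * q\<^sup>2 * s\<^sup>2 = (2 * p)\<^sup>2"
    using s pq_unit by (simp add: algebra_simps)
  finally have "t\<^sup>2 = (2 * p)\<^sup>2"
    by (simp only: of_real_eq_iff)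
  then have "t = 2 * p"
    using t(2) p_pos power2_eq_iff_nonneg[of t "2 * p"] by simp
  then show ?thesis using t by simp
qed

lemma disc_root_nth_0: "disc_root $ 0 = 1"
  by (simp add: disc_root_def sqrt_linear_fps_nth)

text \<open>The series \<open>\<rho> = (1 + z\<^sup>2 - disc_root) / (2 q z)\<close>; the division is exact because
  the numerator has no constant term.\<close>
definition rho :: "complex fps" where
  "rho = Abs_fps (\<lambda>n. (1 + fps_X ^ 2 - disc_root) $ Suc n / of_real (2 * q))"

lemma rho_times_X: "fps_const (of_real (2 * q)) * fps_X * rho = 1 + fps_X ^ 2 - disc_root"
proof (rule fps_ext)
  fix n
  show "(fps_const (of_real (2 * q)) * fps_X * rho) $ n = (1 + fps_X ^ 2 - disc_root) $ n"
    using q_pos by (cases n) (simp_all add: rho_def disc_root_nth_0 mult.assoc)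
qed

lemma abs_summable_rho: "abs_summable_fps rho"
proof -
  have "abs_summable_fps (1 + fps_X ^ 2 - disc_root)"
    by (intro abs_summable_fps_intros abs_summable_disc_root)
  then have "summable (\<lambda>n. norm ((1 + fps_X ^ 2 - disc_root) $ Suc n))"
    unfolding abs_summable_fps_def by (subst summable_Suc_iff)
  then show ?thesis
    unfolding abs_summable_fps_def rho_def by (simp add: norm_divide summable_divide)
qed

text \<open>\<open>\<rho>\<close> is the root of \<open>q z (\<rho>\<^sup>2 + 1) = (1 + z\<^sup>2) \<rho>\<close> that vanishes at \<open>z = 0\<close>.\<close>
lemma rho_quadratic: "fps_const (of_real q) * fps_X * (rho ^ 2 + 1) = (1 + fps_X ^ 2) * rho"
proof -
  let ?Q = "fps_const (complex_of_real q)"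
  have root: "disc_root = 1 + fps_X ^ 2 - 2 * ?Q * fps_X * rho"
    using rho_times_X by (simp add: numeral_fps_const)
  have "4 * ?Q * fps_X * (?Q * fps_X * (rho ^ 2 + 1) - (1 + fps_X ^ 2) * rho)
      = (1 + fps_X ^ 2 - 2 * ?Q * fps_X * rho) ^ 2 - ((1 + fps_X ^ 2) ^ 2 - 4 * ?Q ^ 2 * fps_X ^ 2)"
    by (simp add: algebra_simps power2_eq_square)
  also have "\<dots> = 0"
    using disc_root_squared unfolding root by (simp add: numeral_fps_const)
  finally have "4 * ?Q * fps_X * (?Q * fps_X * (rho ^ 2 + 1) - (1 + fps_X ^ 2) * rho) = 0" .
  moreover have "4 * ?Q * fps_X \<noteq> 0"
    using q_pos by (simp add: numeral_fps_const)
  ultimately show ?thesis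
    by simp
qed

definition decay :: real where
  "decay = (1 - p) / q"

lemma eval_rho_unit:
  assumes "\<bar>s\<bar> = 1"
  shows "eval_fps rho (of_real s) = of_real (s * decay)"
proof -
  have s: "norm (complex_of_real s) \<le> 1" "s\<^sup>2 = 1" "s \<noteq> 0" "(complex_of_real s)\<^sup>2 = 1"
    using assms by (auto simp: abs_square_eq_1 simp flip: of_real_power)
  have "of_real (2 * q * s) * eval_fps rho (of_real s)
      = eval_fps (fps_const (of_real (2 * q)) * fps_X * rho) (of_real s)"
    using s by (simp add: eval_fps_disk_simps abs_summable_fps_intros abs_summable_rho)
  also have "\<dots> = of_real (2 - 2 * p)"
    unfolding rho_times_X using s
    by (simp add: eval_fps_disk_simps abs_summable_fps_intros abs_summable_disc_root
        eval_disc_root_unit[OF assms])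
  finally have "eval_fps rho (of_real s) = of_real ((2 - 2 * p) / (2 * q * s))"
    using s q_pos by (simp add: field_simps)
  also have "(2 - 2 * p) / (2 * q * s) = s * decay"
    using assms q_pos by (cases "s = 1") (auto simp: decay_def field_simps abs_if split: if_splits)
  finally show ?thesis .
qed

text \<open>The generating functions of the reduced walk started at \<open>|0,L\<rangle>\<close>, with reflection sign
  \<open>e = \<plusminus>1\<close>, are the series below divided by \<open>1 - z\<^sup>2\<close>.  The factor \<open>return_factor e\<close>
  carries the boundary condition at the origin.\<close>
definition return_factor :: "real \<Rightarrow> complex fps" where
  "return_factor e = 1 - fps_const (of_real (q / (1 - e * p))) * fps_X * rho"

definition amp_R :: "real \<Rightarrow> nat \<Rightarrow> complex fps" where
  "amp_R e y = (if y = 0 then 0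
     else fps_const (of_real e) * fps_X * return_factor e * rho ^ (y - 1))"

definition amp_L :: "real \<Rightarrow> nat \<Rightarrow> complex fps" where
  "amp_L e y = (if y = 0 then return_factor e
     else fps_const (of_real e) * fps_const (of_real (1 / p)) * return_factor e
            * (rho - fps_const (of_real q) * fps_X) * rho ^ (y - 1))"

text \<open>The coefficient \<open>q / (1 - e p)\<close> of the return factor, characterised as in
  \<open>return_series_equation\<close>.\<close>
lemma return_factor_constant:
  assumes e: "\<bar>e\<bar> = 1"
  shows "q / (1 - e * p) * (e - p) = e * q" and "1 - q / (1 - e * p) * q = - e * p"
proof -
  have ep: "1 - e * p \<noteq> 0" "e * e = 1"
    using e p_pos p_less_1 by (auto simp: abs_if split: if_splits)
  have "e - p = e * (1 - e * p)"
    using ep(2) by (simp add: algebra_simps)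
  then show "q / (1 - e * p) * (e - p) = e * q"
    using ep(1) by simp
  have "1 - q\<^sup>2 = p * p"
    using pq_unit by (simp add: power2_eq_square algebra_simps)
  then have "1 - e * p - q\<^sup>2 = - e * p + (e * e) * (p * p)"
    using ep(2) by simp
  also have "\<dots> = - e * p * (1 - e * p)"
    by (simp add: algebra_simps)
  finally show "1 - q / (1 - e * p) * q = - e * p"
    using ep(1) by (simp add: field_simps power2_eq_square)
qed

lemma return_factor_equation:
  assumes e: "\<bar>e\<bar> = 1"
  shows "return_factor e * parity_fps
           * (fps_const (of_real p) - fps_const (of_real e)
                * (fps_const (of_real q) * fps_X * rho - fps_X\<^sup>2)) = fps_const (of_real p)"
proof -
  let ?c = "q / (1 - e * p)"
  note c = return_factor_constant[OF e]
  have "return_factor e * (fps_const (of_real p) - fps_const (of_real e)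
          * (fps_const (of_real q) * fps_X * rho - fps_X\<^sup>2))
      = fps_const (of_real p) * (1 - fps_X\<^sup>2)"
    unfolding return_factor_def
  proof (rule return_series_equation[OF rho_quadratic])
    show "fps_const (complex_of_real e) * fps_const (complex_of_real e) = 1"
    proof -
      have "e * e = 1"
        using e by (metis abs_mult_self_eq mult_1_right)
      then show ?thesis
        by (simp flip: of_real_mult)
    qed
    show "fps_const (complex_of_real ?c) * (fps_const (complex_of_real e) - fps_const (complex_of_real p))
        = fps_const (complex_of_real e) * fps_const (complex_of_real q)"
      using c(1) by (simp flip: of_real_mult of_real_diff of_real_divide)
    show "1 - fps_const (complex_of_real ?c) * fps_const (complex_of_real q)
        = - fps_const (complex_of_real e) * fps_const (complex_of_real p)"
    proof -
      have "1 - fps_const a = fps_const (1 - a)" for a :: complex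
        by (simp add: fps_eq_iff)
      moreover have "fps_const (complex_of_real (1 - ?c * q)) = fps_const (complex_of_real (- e * p))"
        by (simp only: c(2))
      ultimately show ?thesis
        by simp
    qed
  qed
  then show ?thesis
    using parity_fps_times[where 'a = complex] by (simp add: ac_simps)
qed

lemma walk_amplitudes:
  assumes e: "\<bar>e\<bar> = 1" and phase: "exp (\<i> * complex_of_real \<gamma>) = of_real e"
  shows "qw2_state (of_real q) (- of_real p) (of_real p) (of_real q) \<gamma> t
           = ((\<lambda>y. (amp_R e y * parity_fps) $ t), (\<lambda>y. (amp_L e y * parity_fps) $ t))"
proof -
  let ?E = "fps_const (complex_of_real e)" and ?Q = "fps_const (complex_of_real q)"
  let ?P = "fps_const (complex_of_real p)" and ?P' = "fps_const (complex_of_real (1 / p))"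
  let ?H = "return_factor e * parity_fps"
  have unit: "?P\<^sup>2 + ?Q\<^sup>2 = 1"
    using arg_cong[OF pq_unit, of "\<lambda>x. fps_const (complex_of_real x)"] by simp
  have inv: "?P * ?P' = 1"
    using p_pos by simp
  note ansatz = walk_ansatz[where z = fps_X and \<rho> = rho and H = ?H and e = ?E,
                             OF rho_quadratic unit inv return_factor_equation[OF e]]
  have R: "amp_R e y * parity_fps = (if y = 0 then 0 else ?E * fps_X * ?H * rho ^ (y - 1))" for y
    by (simp add: amp_R_def ac_simps)
  have L: "amp_L e y * parity_fps
             = (if y = 0 then ?H else ?E * ?P' * ?H * (rho - ?Q * fps_X) * rho ^ (y - 1))" for y
    by (simp add: amp_L_def ac_simps)
  show ?thesis
  proof (rule qw2_state_generating_functions)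
    show "amp_R e 0 * parity_fps = 0"
      by (simp add: amp_R_def)
    show "amp_R e 1 * parity_fps
            = fps_X * (fps_const (exp (\<i> * complex_of_real \<gamma>)) * (amp_L e 0 * parity_fps))"
      using ansatz(1) unfolding R L phase by simp
    show "amp_R e y * parity_fps = fps_X * (fps_const (of_real q) * (amp_R e (y - 1) * parity_fps)
            + fps_const (of_real p) * (amp_L e (y - 1) * parity_fps))" if "y \<ge> 2" for y
      using ansatz(2)[OF that] unfolding R L .
    show "amp_L e y * parity_fps = (if y = 0 then 1 else 0)
            + fps_X * (fps_const (- of_real p) * (amp_R e (y + 1) * parity_fps)
            + fps_const (of_real q) * (amp_L e (y + 1) * parity_fps))" for y
      using ansatz(3)[of y] unfolding R L by simp
  qed
qed

lemma abs_summable_return_factor: "abs_summable_fps (return_factor e)"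
  unfolding return_factor_def by (intro abs_summable_fps_intros abs_summable_rho)

lemma abs_summable_amp_R: "abs_summable_fps (amp_R e y)"
  unfolding amp_R_def
  by (auto intro!: abs_summable_fps_intros abs_summable_rho abs_summable_return_factor)

lemma abs_summable_amp_L: "abs_summable_fps (amp_L e y)"
  unfolding amp_L_def by (auto intro!: abs_summable_fps_intros abs_summable_rho abs_summable_return_factor)

text \<open>Values at \<open>z = \<plusminus>1\<close>: the return factor gives \<open>return_value e\<close>, and each step away from
  the origin multiplies by \<open>decay\<close> (and by \<open>z\<close>, which produces the parity pattern).\<close>
definition return_value :: "real \<Rightarrow> real" where
  "return_value e = 1 - (1 - p) / (1 - e * p)"

lemma eval_return_factor:
  assumes s: "\<bar>s\<bar> = 1"
  shows "eval_fps (return_factor e) (of_real s) = of_real (return_value e)"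
proof -
  have "eval_fps (return_factor e) (of_real s) = of_real (1 - q / (1 - e * p) * (s * s) * decay)"
    unfolding return_factor_def using s
    by (simp add: eval_fps_disk_simps abs_summable_fps_intros abs_summable_rho eval_rho_unit
        algebra_simps)
  also have "1 - q / (1 - e * p) * (s * s) * decay = return_value e"
  proof -
    have "s * s = 1"
      using s by (metis abs_mult_self_eq mult_1_right)
    then show ?thesis
      using q_pos by (simp add: decay_def return_value_def)
  qed
  finally show ?thesis .
qed

lemma eval_amp_R:
  assumes s: "\<bar>s\<bar> = 1" and y: "y \<ge> 1"
  shows "eval_fps (amp_R e y) (of_real s) = of_real (s ^ y * (e * return_value e * decay ^ (y - 1)))"
proof -
  obtain k where k: "y = Suc k"
    using y by (cases y) auto
  show ?thesis
    unfolding amp_R_def using s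
    by (simp add: k eval_fps_disk_simps abs_summable_fps_intros abs_summable_rho
        abs_summable_return_factor eval_rho_unit eval_return_factor power_mult_distrib)
qed

text \<open>The identity behind the geometric decay of the \<open>L\<close>-amplitudes.\<close>
lemma decay_minus_q: "decay - q = - p * decay"
proof -
  have "q\<^sup>2 = 1 - p\<^sup>2"
    using pq_unit by simp
  then show ?thesis
    using q_pos by (simp add: decay_def field_simps power2_eq_square)
qed

lemma eval_amp_L:
  assumes s: "\<bar>s\<bar> = 1" and y: "y \<ge> 1"
  shows "eval_fps (amp_L e y) (of_real s) = of_real (s ^ y * (- e * return_value e * decay ^ y))"
proof -
  obtain k where k: "y = Suc k"
    using y by (cases y) auto
  have "eval_fps (amp_L e y) (of_real s)
      = of_real (e * (1 / p) * return_value e * (s * (decay - q)) * (s * decay) ^ k)"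
    unfolding amp_L_def using s
    by (simp add: k eval_fps_disk_simps abs_summable_fps_intros abs_summable_rho
        abs_summable_return_factor eval_rho_unit eval_return_factor algebra_simps)
  also have "\<dots> = of_real (s ^ y * (- e * return_value e * decay ^ y))"
    using p_pos by (simp add: decay_minus_q k power_mult_distrib)
  finally show ?thesis .
qed

lemma eval_amp_L_0:
  assumes s: "\<bar>s\<bar> = 1"
  shows "eval_fps (amp_L e 0) (of_real s) = of_real (return_value e)"
  using eval_return_factor[OF s] by (simp add: amp_L_def)

lemma profile_weights:
  fixes e g d :: real
  assumes e: "\<bar>e\<bar> = 1" and x: "x \<ge> 1"
  shows "(e * g * d ^ (x - 1))\<^sup>2 + (- e * g * d ^ x)\<^sup>2 = g\<^sup>2 * (d ^ (2 * x - 2) * (1 + d\<^sup>2))"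
proof -
  have "e\<^sup>2 = 1"
    using e by (simp add: abs_square_eq_1)
  moreover obtain k where "x = Suc k"
    using x by (cases x) auto
  then have "d ^ x = d * d ^ (x - 1)" and "d ^ (2 * x - 2) = (d ^ (x - 1))\<^sup>2"
    by (simp_all add: power_mult[symmetric] mult.commute)
  ultimately show ?thesis
    by (simp add: power_mult_distrib algebra_simps)
qed

theorem reduced_walk_limit:
  assumes e: "\<bar>e\<bar> = 1" and phase: "exp (\<i> * complex_of_real \<gamma>) = of_real e"
  shows "(\<lambda>t. qw2_prob (of_real q) (- of_real p) (of_real p) (of_real q) \<gamma> t x
             - (1 + (-1) ^ (t + x)) / 2
               * ((return_value e)\<^sup>2 * (if x = 0 then 1 else decay ^ (2 * x - 2) * (1 + decay\<^sup>2))))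
         \<longlonglongrightarrow> 0"
proof -
  have prob: "qw2_prob (of_real q) (- of_real p) (of_real p) (of_real q) \<gamma> t x
      = (if x = 0 then (norm ((amp_L e 0 * parity_fps) $ t))\<^sup>2
         else (norm ((amp_R e x * parity_fps) $ t))\<^sup>2 + (norm ((amp_L e x * parity_fps) $ t))\<^sup>2)" for t
    unfolding qw2_prob_def walk_amplitudes[OF e phase] Let_def by simp
  show ?thesis
  proof (cases "x = 0")
    case True
    have "(\<lambda>t. (norm ((amp_L e 0 * parity_fps) $ t))\<^sup>2 - (1 + (-1) ^ (t + 0)) / 2 * (return_value e)\<^sup>2)
          \<longlonglongrightarrow> 0"
      by (rule parity_fps_coeff_norm_square_limit[OF abs_summable_amp_L]) (simp add: eval_amp_L_0)
    then show ?thesis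
      using True unfolding prob by simp
  next
    case False
    then have x: "x \<ge> 1" by simp
    let ?vR = "e * return_value e * decay ^ (x - 1)" and ?vL = "- e * return_value e * decay ^ x"
    have "(\<lambda>t. ((norm ((amp_R e x * parity_fps) $ t))\<^sup>2 - (1 + (-1) ^ (t + x)) / 2 * ?vR\<^sup>2)
              + ((norm ((amp_L e x * parity_fps) $ t))\<^sup>2 - (1 + (-1) ^ (t + x)) / 2 * ?vL\<^sup>2))
          \<longlonglongrightarrow> 0 + 0"
      by (intro tendsto_add parity_fps_coeff_norm_square_limit abs_summable_amp_R abs_summable_amp_L)
         (simp_all add: eval_amp_R[OF _ x] eval_amp_L[OF _ x])
    moreover have "?vR\<^sup>2 + ?vL\<^sup>2 = (return_value e)\<^sup>2 * (decay ^ (2 * x - 2) * (1 + decay\<^sup>2))"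
      by (rule profile_weights[OF e x])
    then have "(1 + (-1) ^ (t + x)) / 2
                 * ((return_value e)\<^sup>2 * (if x = 0 then 1 else decay ^ (2 * x - 2) * (1 + decay\<^sup>2)))
             = (1 + (-1) ^ (t + x)) / 2 * ?vR\<^sup>2 + (1 + (-1) ^ (t + x)) / 2 * ?vL\<^sup>2" for t
      using False by (simp add: distrib_left[symmetric] mult.assoc)
    ultimately show ?thesis
      by (simp add: prob False algebra_simps)
  qed
qed

lemma return_value_plus: "return_value 1 = 0"
  using p_less_1 by (simp add: return_value_def)

lemma return_value_minus: "return_value (-1) = 2 * p / (1 + p)"
  using p_pos by (simp add: return_value_def field_simps)

lemma decay_squared: "decay\<^sup>2 = (1 - p) / (1 + p)"
proof -
  have "q\<^sup>2 = (1 - p) * (1 + p)"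
    using pq_unit by (simp add: algebra_simps power2_eq_square)
  then show ?thesis
    using p_pos p_less_1 by (simp add: decay_def power_divide power2_eq_square)
qed

end

section \<open>Reduction of a general coin\<close>

text \<open>For a unitary matrix \<open>U\<^sup>* = adj U / det U\<close>; this expresses the second column through the
  first and the determinant.\<close>
lemma unitary2_cofactors:
  assumes "unitary2 a b c d"
  shows "d = cnj a * det2 a b c d" and "c = - cnj b * det2 a b c d"
proof -
  have U: "cnj a * a + cnj c * c = 1" "cnj b * b + cnj d * d = 1"
          "cnj a * b + cnj c * d = 0" "cnj b * a + cnj d * c = 0"
    using assms by (auto simp: unitary2_def)
  have "cnj a * det2 a b c d = d * (cnj a * a + cnj c * c) - c * (cnj a * b + cnj c * d)"
    by (simp add: det2_def algebra_simps)
  then show "d = cnj a * det2 a b c d"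
    using U by simp
  have "- cnj b * det2 a b c d = c * (cnj b * b + cnj d * d) - d * (cnj b * a + cnj d * c)"
    by (simp add: det2_def algebra_simps)
  then show "c = - cnj b * det2 a b c d"
    using U by simp
qed

lemma norm_eq_of_cnj_mult:
  assumes "cnj z * z = complex_of_real (r\<^sup>2)" "r \<ge> 0"
  shows "norm z = r"
proof -
  have "(complex_of_real (norm z))\<^sup>2 = (complex_of_real r)\<^sup>2"
    using assms(1) complex_norm_square[of z] by (simp add: mult.commute)
  then have "(norm z)\<^sup>2 = r\<^sup>2"
    by (metis of_real_eq_iff of_real_power)
  then show ?thesis
    using power2_eq_iff_nonneg[of "norm z" r] assms(2) by simp
qed

lemma unitary_coin_entries:
  fixes a b c d :: complex and p :: real
  assumes U: "unitary2 a b c d" and H: "cnj b * det2 a b c d = - of_real p" and p: "0 < p"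
  defines "D \<equiv> det2 a b c d"
  shows "c = of_real p" "b = - of_real p * D" "d = cnj a * D"
    and "cnj a * a = of_real (1 - p\<^sup>2)" "norm D = 1"
proof -
  have cof: "d = cnj a * D" "c = - cnj b * D"
    using unitary2_cofactors[OF U] by (simp_all add: D_def)
  have bD: "cnj b * D = - of_real p"
    using H by (simp add: D_def)
  show c: "c = of_real p" "d = cnj a * D"
    using cof bD by simp_all
  have "D = a * d - b * c"
    by (simp add: D_def det2_def)
  also have "\<dots> = D * (cnj a * a + cnj b * b)"
    using cof by (simp add: algebra_simps)
  moreover have "D \<noteq> 0"
    using bD p by auto
  ultimately have row: "cnj a * a + cnj b * b = 1"
    by simp
  have col: "cnj a * a + of_real (p\<^sup>2) = 1"
    using U c by (simp add: unitary2_def power2_eq_square)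
  have bb: "cnj b * b = of_real (p\<^sup>2)"
    using row col by (metis add_diff_cancel_left')
  show "cnj a * a = of_real (1 - p\<^sup>2)"
    using col by (simp add: eq_diff_eq)
  have "norm b = p"
    using norm_eq_of_cnj_mult[OF bb] p by simp
  then show "norm D = 1"
    using arg_cong[OF bD, of norm] p by (simp add: norm_mult)
  have "of_real p * (of_real p * D) = of_real p * (- b)"
    using arg_cong[OF bD, of "\<lambda>x. b * x"] bb by (simp add: power2_eq_square algebra_simps)
  moreover have "complex_of_real p \<noteq> 0"
    using p by simp
  ultimately have "of_real p * D = - b"
    using mult_left_cancel by blast
  then show "b = - of_real p * D"
    by simp
qed

text \<open>Every such coin with \<open>p < 1\<close> is the real coin with off-diagonal entry \<open>p\<close> up to two
  unimodular phases: \<open>\<theta>\<close> is a square root of the determinant, \<open>\<mu>\<close> the phase of \<open>c\<^sub>R\<^sub>R / \<theta>\<close>.\<close>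
lemma unitary_coin_normal_form:
  fixes a b c d :: complex and p :: real
  assumes U: "unitary2 a b c d" and H: "cnj b * det2 a b c d = - of_real p"
    and p: "0 < p" "p < 1"
  obtains \<theta> \<mu> where "norm \<theta> = 1" "norm \<mu> = 1"
    "a = of_real (sqrt (1 - p\<^sup>2)) * \<theta> * \<mu>" "b = - of_real p * \<theta>\<^sup>2"
    "c = of_real p" "d = of_real (sqrt (1 - p\<^sup>2)) * \<theta> / \<mu>"
proof -
  define q where "q = sqrt (1 - p\<^sup>2)"
  have q: "q > 0" "q\<^sup>2 = 1 - p\<^sup>2"
    using p abs_square_less_1[of p] by (auto simp: q_def)
  note entries = unitary_coin_entries[OF U H p(1)]
  define \<theta> where "\<theta> = csqrt (det2 a b c d)"
  have \<theta>: "\<theta>\<^sup>2 = det2 a b c d" "norm \<theta> = 1" "\<theta> \<noteq> 0"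
    using entries(5) by (auto simp: \<theta>_def)
  have aa: "cnj a * a = of_real (q\<^sup>2)"
    using entries(4) q(2) by simp
  then have "norm a = q"
    using norm_eq_of_cnj_mult q(1) by simp
  then have "a \<noteq> 0"
    using q by auto
  define \<mu> where "\<mu> = a / (of_real q * \<theta>)"
  have \<mu>: "norm \<mu> = 1" "\<mu> \<noteq> 0"
    using \<open>norm a = q\<close> \<theta> q by (auto simp: \<mu>_def norm_divide norm_mult)
  have a: "a = of_real q * \<theta> * \<mu>"
    using \<theta> q by (simp add: \<mu>_def)
  have "of_real q * \<theta> / \<mu> = of_real q * of_real q * \<theta>\<^sup>2 / a"
    using \<theta> \<open>a \<noteq> 0\<close> q by (simp add: \<mu>_def field_simps power2_eq_square)
  also have "\<dots> = cnj a * a * det2 a b c d / a"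
    using aa \<theta>(1) by (simp add: power2_eq_square)
  also have "\<dots> = d"
    using entries(3) \<open>a \<noteq> 0\<close> by simp
  finally show ?thesis
    using that \<theta> \<mu> a entries(1,2) by (simp add: q_def)
qed

text \<open>The phases \<open>\<theta>\<close>, \<open>\<mu>\<close> of the normal form only multiply each amplitude by a unimodular
  factor depending on time and position (a gauge transformation).\<close>
definition gauge_twist ::
  "complex \<Rightarrow> complex \<Rightarrow> nat \<Rightarrow> (nat \<Rightarrow> complex) \<times> (nat \<Rightarrow> complex) \<Rightarrow> (nat \<Rightarrow> complex) \<times> (nat \<Rightarrow> complex)"
  where "gauge_twist \<theta> \<mu> t \<psi> = ((\<lambda>y. \<theta> ^ t * \<mu> ^ y / (\<theta> * \<mu>) * fst \<psi> y), (\<lambda>y. \<theta> ^ t * \<mu> ^ y * snd \<psi> y))"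

lemma qw2_step_gauge_twist:
  assumes "\<theta> \<noteq> 0" "\<mu> \<noteq> 0"
  shows "qw2_step (q' * \<theta> * \<mu>) (- p' * \<theta>\<^sup>2) p' (q' * \<theta> / \<mu>) \<gamma> (gauge_twist \<theta> \<mu> t \<psi>)
           = gauge_twist \<theta> \<mu> (Suc t) (qw2_step q' (- p') p' q' \<gamma> \<psi>)"
proof -
  have R: "(if y = 0 then 0 else if y = 1 then exp (\<i> * complex_of_real \<gamma>) * (\<theta> ^ t * \<mu> ^ 0 * snd \<psi> 0)
            else q' * \<theta> * \<mu> * (\<theta> ^ t * \<mu> ^ (y - 1) / (\<theta> * \<mu>) * fst \<psi> (y - 1))
                 + p' * (\<theta> ^ t * \<mu> ^ (y - 1) * snd \<psi> (y - 1)))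
         = \<theta> ^ Suc t * \<mu> ^ y / (\<theta> * \<mu>)
           * (if y = 0 then 0 else if y = 1 then exp (\<i> * complex_of_real \<gamma>) * snd \<psi> 0
              else q' * fst \<psi> (y - 1) + p' * snd \<psi> (y - 1))" for y
    using assms by (cases y; cases "y - 1") (auto simp: field_simps)
  have L: "- p' * \<theta>\<^sup>2 * (\<theta> ^ t * \<mu> ^ (y + 1) / (\<theta> * \<mu>) * fst \<psi> (y + 1))
             + q' * \<theta> / \<mu> * (\<theta> ^ t * \<mu> ^ (y + 1) * snd \<psi> (y + 1))
         = \<theta> ^ Suc t * \<mu> ^ y * (- p' * fst \<psi> (y + 1) + q' * snd \<psi> (y + 1))" for y
    using assms by (simp add: field_simps power2_eq_square)
  show ?thesis
    unfolding qw2_step_def gauge_twist_def Let_def fst_conv snd_conv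
    by (simp only: R L)
qed

lemma qw2_state_gauge_twist:
  assumes "\<theta> \<noteq> 0" "\<mu> \<noteq> 0"
  shows "qw2_state (q' * \<theta> * \<mu>) (- p' * \<theta>\<^sup>2) p' (q' * \<theta> / \<mu>) \<gamma> t
           = gauge_twist \<theta> \<mu> t (qw2_state q' (- p') p' q' \<gamma> t)"
proof (induction t)
  case 0
  show ?case
    by (auto simp: qw2_state_def qw2_init_def gauge_twist_def fun_eq_iff)
next
  case (Suc t)
  then show ?case
    using qw2_step_gauge_twist[OF assms] by (simp add: qw2_state_def)
qed

lemma qw2_prob_gauge:
  assumes "norm \<theta> = 1" "norm \<mu> = 1"
  shows "qw2_prob (q' * \<theta> * \<mu>) (- p' * \<theta>\<^sup>2) p' (q' * \<theta> / \<mu>) \<gamma> t x = qw2_prob q' (- p') p' q' \<gamma> t x"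
proof -
  have "\<theta> \<noteq> 0" "\<mu> \<noteq> 0"
    using assms by auto
  then show ?thesis
    unfolding qw2_prob_def qw2_state_gauge_twist[OF \<open>\<theta> \<noteq> 0\<close> \<open>\<mu> \<noteq> 0\<close>]
    using assms by (simp add: gauge_twist_def Let_def norm_mult norm_divide norm_power)
qed

section \<open>The walk on the \<open>\<kappa>\<close>-regular tree\<close>

lemma tree_coin_parameters:
  fixes \<kappa> :: nat
  assumes "\<kappa> \<ge> 3"
  defines "p \<equiv> 1 - 2 / real \<kappa>"
  shows "0 < p" "p < 1" "2 * p / (1 + p) = (real \<kappa> - 2) / (real \<kappa> - 1)"
    and "(1 - p) / (1 + p) = 1 / (real \<kappa> - 1)"
proof -
  have k: "real \<kappa> \<ge> 3"
    using assms(1) by simp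
  then show "0 < p" "p < 1"
    by (auto simp: p_def field_simps)
  show "2 * p / (1 + p) = (real \<kappa> - 2) / (real \<kappa> - 1)"
    and "(1 - p) / (1 + p) = 1 / (real \<kappa> - 1)"
    using k by (simp_all add: p_def field_simps)
qed

text \<open>Rewriting the profile off the origin: with \<open>d\<^sup>2 = 1/(\<kappa> - 1)\<close> one has \<open>1 + d\<^sup>2 = \<kappa> d\<^sup>2\<close>.\<close>
lemma tree_profile:
  fixes \<kappa> :: nat and d :: real
  assumes "\<kappa> \<ge> 3" "d\<^sup>2 = 1 / (real \<kappa> - 1)" "x \<ge> 1"
  shows "d ^ (2 * x - 2) * (1 + d\<^sup>2) = real \<kappa> * (1 / (real \<kappa> - 1)) ^ x"
proof -
  obtain k where x: "x = Suc k"
    using assms(3) by (cases x) auto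
  have "1 + d\<^sup>2 = real \<kappa> * d\<^sup>2"
    using assms(1,2) by (simp add: field_simps)
  moreover have "d ^ (2 * x - 2) = (d\<^sup>2) ^ k"
    by (simp add: x power_mult)
  ultimately show ?thesis
    by (simp add: x assms(2)[symmetric] ac_simps)
qed

theorem corollary3:
  fixes \<kappa> :: nat and cRR cLR cRL cLL :: complex and \<gamma> :: real and x :: nat
  assumes "\<kappa> \<ge> 3"
    and "unitary2 cRR cLR cRL cLL"
    and "cnj cLR * det2 cRR cLR cRL cLL = 2 / of_nat \<kappa> - 1"
    and "\<gamma> = 0 \<or> \<gamma> = pi"
  defines "C \<equiv> (if \<gamma> = 0 then 0 else ((real \<kappa> - 2) / (real \<kappa> - 1))\<^sup>2)"
  shows "(\<lambda>t. qw2_prob cRR cLR cRL cLL \<gamma> t x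
             - (1 + (-1) ^ (t + x)) / 2 *
               (if x = 0 then C else real \<kappa> * C * (1 / (real \<kappa> - 1)) ^ x))
         \<longlonglongrightarrow> 0"
proof -
  define p where "p = 1 - 2 / real \<kappa>"
  define q where "q = sqrt (1 - p\<^sup>2)"
  note par = tree_coin_parameters[OF assms(1), folded p_def]
  have "p\<^sup>2 < 1"
    using par(1,2) abs_square_less_1[of p] by simp
  then interpret reduced_coin p q
    by unfold_locales (use par in \<open>auto simp: q_def\<close>)
  have "cnj cLR * det2 cRR cLR cRL cLL = - of_real p"
    using assms(3) by (simp add: p_def)
  then obtain \<theta> \<mu> where \<theta>\<mu>: "norm \<theta> = 1" "norm \<mu> = 1"
    "cRR = of_real q * \<theta> * \<mu>" "cLR = - of_real p * \<theta>\<^sup>2" "cRL = of_real p" "cLL = of_real q * \<theta> / \<mu>"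
    using unitary_coin_normal_form[OF assms(2) _ par(1,2)] unfolding q_def by metis
  define e :: real where "e = (if \<gamma> = 0 then 1 else -1)"
  have e: "\<bar>e\<bar> = 1" and phase: "exp (\<i> * complex_of_real \<gamma>) = of_real e"
    using assms(4) by (auto simp: e_def)
  have profile: "(return_value e)\<^sup>2 * (if x = 0 then 1 else decay ^ (2 * x - 2) * (1 + decay\<^sup>2))
      = (if x = 0 then C else real \<kappa> * C * (1 / (real \<kappa> - 1)) ^ x)"
    using tree_profile[OF assms(1) decay_squared[unfolded par(4)], of x] par(3)
    by (auto simp: C_def e_def return_value_plus return_value_minus)
  show ?thesis
    using reduced_walk_limit[OF e phase, of x]
    unfolding \<theta>\<mu>(3-6) qw2_prob_gauge[OF \<theta>\<mu>(1,2)] profile .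
qed

end
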